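(* Let $M\in\bar{\mathcal{O}}$ be indecomposable. Then every $\varphi\in\operatorname{End}_{\bar{\mathcal{O}}}(M)$ is either an automorphism or locally nilpotent (i.e. for every $v\in M$ there is $k\ge0$ with $\varphi^k(v)=0$).
   Context: $\mathbb{K}$ is an algebraically closed field of characteristic $0$. $\mathfrak{g}=\bigcup_{n\ge1}\mathfrak{g}_n$ is a root-reductive Lie algebra (nested finite-dimensional reductive Lie algebras with nested Cartan subalgebras, each inclusion $\mathfrak{g}_n\hookrightarrow\mathfrak{g}_{n+1}$ a root inclusion). $\mathfrak{h}$ is a splitting maximal toral subalgebra ($\mathfrak{h}\cap\mathfrak{g}_n$ maximal toral in $\mathfrak{g}_n$, $\mathfrak{g}=\mathfrak{h}\oplus\bigoplus_{\alpha\in\Delta}\mathfrak{g}^\alpha$). $\mathfrak{b}=\mathfrak{h}\oplus\mathfrak{n}$, $\mathfrak{n}=\bigoplus_{\alpha\in\Delta^+}\mathfrak{g}^\alpha$, is a splitting Borel subalgebra given by positive roots $\Delta^+$, assumed Dynkin (generated by $\mathfrak{h}$ and the simple root spaces). $\bar{\mathcal{O}}$ is the full subcategory of $\mathfrak{g}$-modules that are $\mathfrak{h}$-weight modules with finite-dimensional weight spaces and are locally $\mathfrak{n}$-finite. *)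

theory Defs
  imports Main "HOL-Computational_Algebra.Polynomial" "HOL-Library.Function_Algebras"
begin

(* Ambient conventions:
   - 'k is the ground field (class field_char_0, plus algebraic closedness as an explicit hypothesis);
   - the Lie algebra g is the whole type 'g, a 'k-vector space via sg, with bracket br;
   - a g-module M is the whole type 'm, a 'k-vector space via sm, with action act;
   - weights / roots (elements of h^* ) are represented by functions 'g => 'k that vanish outside h,
     so that two weights are equal iff they agree on h. *)

definition alg_closed_field :: "'k::field itself \<Rightarrow> bool" where
  "alg_closed_field _ \<longleftrightarrow> (\<forall>p :: 'k poly. degree p > 0 \<longrightarrow> (\<exists>x. poly p x = 0))"

definition lie_algebra :: "('k::field \<Rightarrow> 'g::ab_group_add \<Rightarrow> 'g) \<Rightarrow> ('g \<Rightarrow> 'g \<Rightarrow> 'g) \<Rightarrow> bool" where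
  "lie_algebra sg br \<longleftrightarrow> vector_space sg
     \<and> (\<forall>x y z. br (x + y) z = br x z + br y z)
     \<and> (\<forall>a x y. br (sg a x) y = sg a (br x y))
     \<and> (\<forall>x. br x x = 0)
     \<and> (\<forall>x y z. br x (br y z) + br y (br z x) + br z (br x y) = 0)"

definition fin_dim :: "('k::field \<Rightarrow> 'v::ab_group_add \<Rightarrow> 'v) \<Rightarrow> 'v set \<Rightarrow> bool" where
  "fin_dim s S \<longleftrightarrow> module.subspace s S \<and> (\<exists>F. finite F \<and> F \<subseteq> S \<and> module.span s F = S)"

definition subalg :: "('k::field \<Rightarrow> 'g::ab_group_add \<Rightarrow> 'g) \<Rightarrow> ('g \<Rightarrow> 'g \<Rightarrow> 'g) \<Rightarrow> 'g set \<Rightarrow> bool" where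
  "subalg sg br S \<longleftrightarrow> module.subspace sg S \<and> (\<forall>x\<in>S. \<forall>y\<in>S. br x y \<in> S)"

definition lie_ideal :: "('k::field \<Rightarrow> 'g::ab_group_add \<Rightarrow> 'g) \<Rightarrow> ('g \<Rightarrow> 'g \<Rightarrow> 'g) \<Rightarrow> 'g set \<Rightarrow> 'g set \<Rightarrow> bool" where
  "lie_ideal sg br S I \<longleftrightarrow> module.subspace sg I \<and> I \<subseteq> S \<and> (\<forall>x\<in>S. \<forall>y\<in>I. br x y \<in> I)"

text \<open>Finite-dimensional reductive Lie algebra: the adjoint representation is semisimple,
  i.e. every ideal (= ad-invariant subspace) has a complementary ideal.\<close>
definition reductive :: "('k::field \<Rightarrow> 'g::ab_group_add \<Rightarrow> 'g) \<Rightarrow> ('g \<Rightarrow> 'g \<Rightarrow> 'g) \<Rightarrow> 'g set \<Rightarrow> bool" where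
  "reductive sg br S \<longleftrightarrow> subalg sg br S \<and> fin_dim sg S
     \<and> (\<forall>I. lie_ideal sg br S I \<longrightarrow>
           (\<exists>J. lie_ideal sg br S J \<and> I \<inter> J = {0} \<and> {a + b | a b. a \<in> I \<and> b \<in> J} = S))"

definition ad_semisimple :: "('k::field \<Rightarrow> 'g::ab_group_add \<Rightarrow> 'g) \<Rightarrow> ('g \<Rightarrow> 'g \<Rightarrow> 'g) \<Rightarrow> 'g set \<Rightarrow> 'g \<Rightarrow> bool" where
  "ad_semisimple sg br S x \<longleftrightarrow> module.span sg {y \<in> S. \<exists>c. br x y = sg c y} = S"

definition toral :: "('k::field \<Rightarrow> 'g::ab_group_add \<Rightarrow> 'g) \<Rightarrow> ('g \<Rightarrow> 'g \<Rightarrow> 'g) \<Rightarrow> 'g set \<Rightarrow> 'g set \<Rightarrow> bool" where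
  "toral sg br S T \<longleftrightarrow> subalg sg br T \<and> T \<subseteq> S \<and> (\<forall>x\<in>T. ad_semisimple sg br S x)"

definition max_toral :: "('k::field \<Rightarrow> 'g::ab_group_add \<Rightarrow> 'g) \<Rightarrow> ('g \<Rightarrow> 'g \<Rightarrow> 'g) \<Rightarrow> 'g set \<Rightarrow> 'g set \<Rightarrow> bool" where
  "max_toral sg br S T \<longleftrightarrow> toral sg br S T \<and> (\<forall>T'. toral sg br S T' \<and> T \<subseteq> T' \<longrightarrow> T' = T)"

definition root_space :: "('k::field \<Rightarrow> 'g::ab_group_add \<Rightarrow> 'g) \<Rightarrow> ('g \<Rightarrow> 'g \<Rightarrow> 'g) \<Rightarrow> 'g set \<Rightarrow> 'g set \<Rightarrow> ('g \<Rightarrow> 'k) \<Rightarrow> 'g set" where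
  "root_space sg br S T \<alpha> = {x \<in> S. \<forall>t\<in>T. br t x = sg (\<alpha> t) x}"

definition roots :: "('k::field \<Rightarrow> 'g::ab_group_add \<Rightarrow> 'g) \<Rightarrow> ('g \<Rightarrow> 'g \<Rightarrow> 'g) \<Rightarrow> 'g set \<Rightarrow> 'g set \<Rightarrow> ('g \<Rightarrow> 'k) set" where
  "roots sg br S T = {\<alpha>. (\<forall>x. x \<notin> T \<longrightarrow> \<alpha> x = 0) \<and> (\<exists>t\<in>T. \<alpha> t \<noteq> 0) \<and> root_space sg br S T \<alpha> \<noteq> {0}}"

definition root_inclusion :: "('k::field \<Rightarrow> 'g::ab_group_add \<Rightarrow> 'g) \<Rightarrow> ('g \<Rightarrow> 'g \<Rightarrow> 'g) \<Rightarrow> 'g set \<Rightarrow> 'g set \<Rightarrow> 'g set \<Rightarrow> 'g set \<Rightarrow> bool" where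
  "root_inclusion sg br S1 T1 S2 T2 \<longleftrightarrow> S1 \<subseteq> S2 \<and> T1 \<subseteq> T2 \<and>
     (\<forall>\<alpha>\<in>roots sg br S1 T1. \<exists>\<beta>\<in>roots sg br S2 T2. root_space sg br S1 T1 \<alpha> \<subseteq> root_space sg br S2 T2 \<beta>)"

definition root_reductive :: "('k::field \<Rightarrow> 'g::ab_group_add \<Rightarrow> 'g) \<Rightarrow> ('g \<Rightarrow> 'g \<Rightarrow> 'g) \<Rightarrow> (nat \<Rightarrow> 'g set) \<Rightarrow> 'g set \<Rightarrow> bool" where
  "root_reductive sg br gs h \<longleftrightarrow>
     (\<forall>n. reductive sg br (gs n)) \<and> (\<forall>n. gs n \<subseteq> gs (Suc n)) \<and> (\<Union>n. gs n) = UNIV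
     \<and> (\<forall>n. max_toral sg br (gs n) (h \<inter> gs n))
     \<and> (\<forall>n. root_inclusion sg br (gs n) (h \<inter> gs n) (gs (Suc n)) (h \<inter> gs (Suc n)))"

definition splitting_max_toral :: "('k::field \<Rightarrow> 'g::ab_group_add \<Rightarrow> 'g) \<Rightarrow> ('g \<Rightarrow> 'g \<Rightarrow> 'g) \<Rightarrow> 'g set \<Rightarrow> bool" where
  "splitting_max_toral sg br h \<longleftrightarrow> max_toral sg br UNIV h
     \<and> module.span sg (h \<union> (\<Union>\<alpha>\<in>roots sg br UNIV h. root_space sg br UNIV h \<alpha>)) = UNIV"

definition pos_system :: "('k::field \<Rightarrow> 'g::ab_group_add \<Rightarrow> 'g) \<Rightarrow> ('g \<Rightarrow> 'g \<Rightarrow> 'g) \<Rightarrow> 'g set \<Rightarrow> ('g \<Rightarrow> 'k) set \<Rightarrow> bool" where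
  "pos_system sg br h P \<longleftrightarrow> P \<subseteq> roots sg br UNIV h
     \<and> (\<forall>\<alpha>\<in>roots sg br UNIV h. \<alpha> \<in> P \<or> - \<alpha> \<in> P)
     \<and> (\<forall>\<alpha>\<in>P. - \<alpha> \<notin> P)
     \<and> (\<forall>\<alpha>\<in>P. \<forall>\<beta>\<in>P. \<alpha> + \<beta> \<in> roots sg br UNIV h \<longrightarrow> \<alpha> + \<beta> \<in> P)"

definition nilrad :: "('k::field \<Rightarrow> 'g::ab_group_add \<Rightarrow> 'g) \<Rightarrow> ('g \<Rightarrow> 'g \<Rightarrow> 'g) \<Rightarrow> 'g set \<Rightarrow> ('g \<Rightarrow> 'k) set \<Rightarrow> 'g set" where
  "nilrad sg br h P = module.span sg (\<Union>\<alpha>\<in>P. root_space sg br UNIV h \<alpha>)"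

definition borel :: "('k::field \<Rightarrow> 'g::ab_group_add \<Rightarrow> 'g) \<Rightarrow> ('g \<Rightarrow> 'g \<Rightarrow> 'g) \<Rightarrow> 'g set \<Rightarrow> ('g \<Rightarrow> 'k) set \<Rightarrow> 'g set" where
  "borel sg br h P = module.span sg (h \<union> nilrad sg br h P)"

definition simple_root :: "('g \<Rightarrow> 'k::field) set \<Rightarrow> ('g \<Rightarrow> 'k) \<Rightarrow> bool" where
  "simple_root P \<alpha> \<longleftrightarrow> \<alpha> \<in> P \<and> \<not> (\<exists>\<beta>\<in>P. \<exists>\<gamma>\<in>P. \<alpha> = \<beta> + \<gamma>)"

definition lie_gen :: "('k::field \<Rightarrow> 'g::ab_group_add \<Rightarrow> 'g) \<Rightarrow> ('g \<Rightarrow> 'g \<Rightarrow> 'g) \<Rightarrow> 'g set \<Rightarrow> 'g set" where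
  "lie_gen sg br A = \<Inter>{B. subalg sg br B \<and> A \<subseteq> B}"

definition dynkin :: "('k::field \<Rightarrow> 'g::ab_group_add \<Rightarrow> 'g) \<Rightarrow> ('g \<Rightarrow> 'g \<Rightarrow> 'g) \<Rightarrow> 'g set \<Rightarrow> ('g \<Rightarrow> 'k) set \<Rightarrow> bool" where
  "dynkin sg br h P \<longleftrightarrow>
     borel sg br h P = lie_gen sg br (h \<union> (\<Union>\<alpha>\<in>{\<alpha>. simple_root P \<alpha>}. root_space sg br UNIV h \<alpha>))"

definition g_module :: "('k::field \<Rightarrow> 'g::ab_group_add \<Rightarrow> 'g) \<Rightarrow> ('g \<Rightarrow> 'g \<Rightarrow> 'g)
    \<Rightarrow> ('k \<Rightarrow> 'm::ab_group_add \<Rightarrow> 'm) \<Rightarrow> ('g \<Rightarrow> 'm \<Rightarrow> 'm) \<Rightarrow> bool" where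
  "g_module sg br sm act \<longleftrightarrow> vector_space sm
     \<and> (\<forall>x u v. act x (u + v) = act x u + act x v)
     \<and> (\<forall>x a v. act x (sm a v) = sm a (act x v))
     \<and> (\<forall>x y v. act (x + y) v = act x v + act y v)
     \<and> (\<forall>a x v. act (sg a x) v = sm a (act x v))
     \<and> (\<forall>x y v. act (br x y) v = act x (act y v) - act y (act x v))"

definition weight_space :: "('k::field \<Rightarrow> 'm::ab_group_add \<Rightarrow> 'm) \<Rightarrow> ('g \<Rightarrow> 'm \<Rightarrow> 'm) \<Rightarrow> 'g set \<Rightarrow> ('g \<Rightarrow> 'k) \<Rightarrow> 'm set" where
  "weight_space sm act h lam = {v. \<forall>t\<in>h. act t v = sm (lam t) v}"

definition n_span :: "('k::field \<Rightarrow> 'm::ab_group_add \<Rightarrow> 'm) \<Rightarrow> ('g \<Rightarrow> 'm \<Rightarrow> 'm) \<Rightarrow> 'g set \<Rightarrow> 'm \<Rightarrow> 'm set" where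
  "n_span sm act N v = \<Inter>{U. module.subspace sm U \<and> v \<in> U \<and> (\<forall>x\<in>N. \<forall>u\<in>U. act x u \<in> U)}"

definition in_O_bar :: "('k::field \<Rightarrow> 'g::ab_group_add \<Rightarrow> 'g) \<Rightarrow> ('g \<Rightarrow> 'g \<Rightarrow> 'g) \<Rightarrow> 'g set \<Rightarrow> ('g \<Rightarrow> 'k) set
    \<Rightarrow> ('k \<Rightarrow> 'm::ab_group_add \<Rightarrow> 'm) \<Rightarrow> ('g \<Rightarrow> 'm \<Rightarrow> 'm) \<Rightarrow> bool" where
  "in_O_bar sg br h P sm act \<longleftrightarrow> g_module sg br sm act
     \<and> module.span sm (\<Union>lam. weight_space sm act h lam) = UNIV
     \<and> (\<forall>lam. fin_dim sm (weight_space sm act h lam))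
     \<and> (\<forall>v. fin_dim sm (n_span sm act (nilrad sg br h P) v))"

definition submodule :: "('k::field \<Rightarrow> 'm::ab_group_add \<Rightarrow> 'm) \<Rightarrow> ('g \<Rightarrow> 'm \<Rightarrow> 'm) \<Rightarrow> 'm set \<Rightarrow> bool" where
  "submodule sm act U \<longleftrightarrow> module.subspace sm U \<and> (\<forall>x u. u \<in> U \<longrightarrow> act x u \<in> U)"

definition indecomposable :: "('k::field \<Rightarrow> 'm::ab_group_add \<Rightarrow> 'm) \<Rightarrow> ('g \<Rightarrow> 'm \<Rightarrow> 'm) \<Rightarrow> bool" where
  "indecomposable sm act \<longleftrightarrow> (UNIV :: 'm set) \<noteq> {0}
     \<and> (\<forall>U V. submodule sm act U \<and> submodule sm act V \<and> U \<inter> V = {0}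
              \<and> {u + v | u v. u \<in> U \<and> v \<in> V} = UNIV \<longrightarrow> U = {0} \<or> V = {0})"

definition module_endo :: "('k::field \<Rightarrow> 'm::ab_group_add \<Rightarrow> 'm) \<Rightarrow> ('g \<Rightarrow> 'm \<Rightarrow> 'm) \<Rightarrow> ('m \<Rightarrow> 'm) \<Rightarrow> bool" where
  "module_endo sm act \<phi> \<longleftrightarrow> (\<forall>u v. \<phi> (u + v) = \<phi> u + \<phi> v)
     \<and> (\<forall>a v. \<phi> (sm a v) = sm a (\<phi> v)) \<and> (\<forall>x v. \<phi> (act x v) = act x (\<phi> v))"

end

(* Fitting's lemma, made local. Every vector of M lies in a finite-dimensional phi-stable
   subspace F, since M is spanned by its finite-dimensional weight spaces and phi preserves them.
   On such an F the images phi^j F decrease and the kernels of phi^j on F increase, so both chains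
   stabilise, and F splits into a part killed by a power of phi and a part lying in every phi^j F.
   Collecting these pieces over all F splits M into the generalised kernel of phi and its stable
   image; both are submodules because phi commutes with the action, so indecomposability kills one
   of them. If the generalised kernel is zero, phi is injective and M is its own stable image, so
   phi is also surjective; otherwise phi is locally nilpotent. *)

theory Submission
  imports Defs
begin

lemma funpow_image_antimono:
  assumes "f ` S \<subseteq> S"
  shows "antimono (\<lambda>j. (f ^^ j) ` S)"
  unfolding antimono_iff_le_Suc
proof
  fix j
  have "(f ^^ Suc j) ` S = (f ^^ j) ` (f ` S)"
    by (simp only: funpow_Suc_right image_comp)
  then show "(f ^^ Suc j) ` S \<subseteq> (f ^^ j) ` S"
    using assms by blast
qed

lemma funpow_commute:
  assumes "\<And>x. g (f x) = f (g x)"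
  shows "(f ^^ n) (g x) = g ((f ^^ n) x)"
  by (induction n) (simp_all add: assms)

lemma monotone_bounded_nat_seq_stabilizes:
  fixes f :: "nat \<Rightarrow> nat"
  assumes "mono f \<or> antimono f" and "\<And>j. f j \<le> b"
  shows "\<exists>k. \<forall>j\<ge>k. f j = f k"
proof -
  have fin: "finite (range f)"
    using assms(2) finite_nat_set_iff_bounded_le by blast
  from assms(1) show ?thesis
  proof
    assume "mono f"
    obtain k where "f k = Max (range f)"
      using Max_in[OF fin] by auto
    then have "f j = f k" if "j \<ge> k" for j
      using monoD[OF \<open>mono f\<close> that] Max_ge[OF fin, of "f j"] by simp
    then show ?thesis by blast
  next
    assume "antimono f"
    obtain k where "f k = Min (range f)"
      using Min_in[OF fin] by auto
    then have "f j = f k" if "j \<ge> k" for j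
      using antimonoD[OF \<open>antimono f\<close> that] Min_le[OF fin, of "f j"] by simp
    then show ?thesis by blast
  qed
qed

context vector_space
begin

lemma dim_subset_finite_span:
  assumes "A \<subseteq> B" "B \<subseteq> span W" "finite W"
  shows "dim A \<le> dim B"
proof -
  obtain C where C: "C \<subseteq> B" "independent C" "B \<subseteq> span C" "card C = dim B"
    by (rule basis_exists)
  have "finite C"
    using independent_span_bound[OF assms(3) C(2)] C(1) assms(2) by blast
  then show ?thesis
    using dim_le_card[of A C] assms(1) C(3,4) by simp
qed

lemma subspace_dim_equal_finite_span:
  assumes "subspace A" "A \<subseteq> B" "B \<subseteq> span W" "finite W" "dim B \<le> dim A"
  shows "A = B"
proof (rule ccontr)
  assume "A \<noteq> B"
  then obtain x where x: "x \<in> B" "x \<notin> A"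
    using assms(2) by blast
  obtain C where C: "C \<subseteq> A" "independent C" "A \<subseteq> span C" "card C = dim A"
    by (rule basis_exists)
  have "x \<notin> span C"
    using x(2) span_minimal[OF C(1) assms(1)] by blast
  then have indep: "independent (insert x C)" and xC: "x \<notin> C"
    using independent_insertI[OF _ C(2)] span_base[of x C] by auto
  have sub: "insert x C \<subseteq> B"
    using C(1) assms(2) x(1) by blast
  have "finite (insert x C)"
    using independent_span_bound[OF assms(4) indep] sub assms(3) by (meson order_trans)
  then have "dim (insert x C) = card C + 1"
    using dim_eq_card_independent[OF indep] xC by simp
  moreover have "dim (insert x C) \<le> dim B"
    using dim_subset_finite_span[OF sub assms(3,4)] .
  ultimately show False
    using assms(5) C(4) by simp
qed

lemma subspace_chain_stabilizes:
  fixes D :: "nat \<Rightarrow> 'b set"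
  assumes sub: "\<And>j. subspace (D j)" and bound: "\<And>j. D j \<subseteq> span W" "finite W"
    and chain: "mono D \<or> antimono D"
  shows "\<exists>k. \<forall>j\<ge>k. D j = D k"
proof -
  have dim_mono: "dim (D i) \<le> dim (D j)" if "D i \<subseteq> D j" for i j
    using dim_subset_finite_span[OF that bound] .
  have "mono (\<lambda>j. dim (D j)) \<or> antimono (\<lambda>j. dim (D j))"
    using chain by (auto intro!: monoI antimonoI dim_mono dest: monoD antimonoD)
  moreover have "dim (D j) \<le> card W" for j
    using dim_le_card[OF bound] .
  ultimately obtain k where k: "\<And>j. j \<ge> k \<Longrightarrow> dim (D j) = dim (D k)"
    using monotone_bounded_nat_seq_stabilizes[of "\<lambda>j. dim (D j)" "card W"] by blast
  have "D j = D k" if jk: "j \<ge> k" for j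
    using chain
  proof
    assume "mono D"
    then show ?thesis
      using subspace_dim_equal_finite_span[OF sub monoD[OF \<open>mono D\<close> jk] bound] k[OF jk] by simp
  next
    assume "antimono D"
    then show ?thesis
      using subspace_dim_equal_finite_span[OF sub antimonoD[OF \<open>antimono D\<close> jk] bound] k[OF jk] by simp
  qed
  then show ?thesis by blast
qed

end

locale linear_endo = vector_space s
  for s :: "'k::field \<Rightarrow> 'm::ab_group_add \<Rightarrow> 'm" +
  fixes \<phi> :: "'m \<Rightarrow> 'm"
  assumes hom: "module_hom s s \<phi>"
begin

lemma module_hom_funpow: "module_hom s s (\<phi> ^^ j)"
proof (induction j)
  case 0
  show ?case
    using module_axioms by (simp add: module_hom_iff)
next
  case (Suc j)
  then show ?case
    using module_hom_compose[OF Suc hom] by (simp add: comp_def)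
qed

lemma phi_zero [simp]: "\<phi> 0 = 0"
  using module_hom.zero[OF hom] .

lemmas pow_zero [simp] = module_hom.zero[OF module_hom_funpow]
  and pow_add = module_hom.add[OF module_hom_funpow]
  and pow_diff = module_hom.diff[OF module_hom_funpow]
  and pow_scale = module_hom.scale[OF module_hom_funpow]

lemma pow_eq_0_mono:
  assumes "(\<phi> ^^ m) v = 0" "m \<le> n"
  shows "(\<phi> ^^ n) v = 0"
proof -
  have "(\<phi> ^^ n) v = (\<phi> ^^ (n - m + m)) v"
    using assms(2) by simp
  also have "\<dots> = (\<phi> ^^ (n - m)) ((\<phi> ^^ m) v)"
    by (simp only: funpow_add comp_apply)
  finally show ?thesis
    using assms(1) by simp
qed

definition gen_kernel :: "'m set" where
  "gen_kernel = {v. \<exists>m. (\<phi> ^^ m) v = 0}"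

definition stable_image :: "'m set" where
  "stable_image = {v. \<exists>B. finite B \<and> \<phi> ` span B \<subseteq> span B \<and> (\<forall>j. v \<in> (\<phi> ^^ j) ` span B)}"

definition locally_finite_part :: "'m set" where
  "locally_finite_part = {v. \<exists>B. finite B \<and> \<phi> ` span B \<subseteq> span B \<and> v \<in> span B}"

lemma stable_span_Un:
  assumes "\<phi> ` span B \<subseteq> span B" "\<phi> ` span C \<subseteq> span C"
  shows "\<phi> ` span (B \<union> C) \<subseteq> span (B \<union> C)"
proof -
  have "\<phi> ` (B \<union> C) \<subseteq> span (B \<union> C)"
    using assms span_superset[of B] span_superset[of C]
      span_mono[of B "B \<union> C"] span_mono[of C "B \<union> C"] by blast
  then have "span (\<phi> ` (B \<union> C)) \<subseteq> span (B \<union> C)"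
    by (simp add: span_minimal)
  then show ?thesis
    using module_hom.span_image[OF module_hom_funpow[of 1]] by simp
qed

lemma stable_span_image:
  assumes "module_hom s s g" "\<And>v. g (\<phi> v) = \<phi> (g v)" "\<phi> ` span B \<subseteq> span B"
  shows "\<phi> ` span (g ` B) \<subseteq> span (g ` B)"
proof -
  have span_g: "span (g ` B) = g ` span B"
    using module_hom.span_image[OF assms(1)] by simp
  then have "\<phi> ` span (g ` B) = g ` \<phi> ` span B"
    by (simp add: image_image assms(2))
  then show ?thesis
    using assms(3) span_g by auto
qed

lemma image_chain_stabilizes:
  assumes "finite B" "\<phi> ` span B \<subseteq> span B"
  shows "\<exists>k. \<forall>j\<ge>k. (\<phi> ^^ j) ` span B = (\<phi> ^^ k) ` span B"
proof (rule subspace_chain_stabilizes[of "\<lambda>j. (\<phi> ^^ j) ` span B", OF _ _ assms(1)])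
  have antimono: "antimono (\<lambda>j. (\<phi> ^^ j) ` span B)"
    by (rule funpow_image_antimono[OF assms(2)])
  then show "(\<phi> ^^ j) ` span B \<subseteq> span B" for j
    using antimonoD[OF antimono, of 0 j] by simp
  show "subspace ((\<phi> ^^ j) ` span B)" for j
    by (rule module_hom.subspace_image[OF module_hom_funpow subspace_span])
  show "mono (\<lambda>j. (\<phi> ^^ j) ` span B) \<or> antimono (\<lambda>j. (\<phi> ^^ j) ` span B)"
    using antimono ..
qed

lemma kernel_chain_stabilizes:
  assumes "finite B"
  shows "\<exists>k. \<forall>j\<ge>k. span B \<inter> {w. (\<phi> ^^ j) w = 0} = span B \<inter> {w. (\<phi> ^^ k) w = 0}"
proof (rule subspace_chain_stabilizes[of "\<lambda>j. span B \<inter> {w. (\<phi> ^^ j) w = 0}", OF _ _ assms])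
  show "subspace (span B \<inter> {w. (\<phi> ^^ j) w = 0})" for j
    by (rule subspace_inter[OF subspace_span module_hom.subspace_kernel[OF module_hom_funpow]])
  show "span B \<inter> {w. (\<phi> ^^ j) w = 0} \<subseteq> span B" for j
    by blast
  have "mono (\<lambda>j. span B \<inter> {w. (\<phi> ^^ j) w = 0})"
    unfolding mono_iff_le_Suc by auto
  then show "mono (\<lambda>j. span B \<inter> {w. (\<phi> ^^ j) w = 0}) \<or>
      antimono (\<lambda>j. span B \<inter> {w. (\<phi> ^^ j) w = 0})" ..
qed

lemma stable_span_decompose:
  assumes "finite B" "\<phi> ` span B \<subseteq> span B" "v \<in> span B"
  shows "\<exists>a b. v = a + b \<and> a \<in> gen_kernel \<and> b \<in> stable_image"
proof -
  obtain k where k: "\<And>j. j \<ge> k \<Longrightarrow> (\<phi> ^^ j) ` span B = (\<phi> ^^ k) ` span B"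
    using image_chain_stabilizes[OF assms(1,2)] by blast
  have "(\<phi> ^^ k) v \<in> (\<phi> ^^ (k + k)) ` span B"
    using k[of "k + k"] assms(3) by simp
  then obtain w where w: "w \<in> span B" "(\<phi> ^^ k) v = (\<phi> ^^ k) ((\<phi> ^^ k) w)"
    by (auto simp: funpow_add)
  have "v - (\<phi> ^^ k) w \<in> gen_kernel"
    unfolding gen_kernel_def using w(2) by (auto simp: pow_diff)
  moreover have "(\<phi> ^^ k) w \<in> (\<phi> ^^ j) ` span B" for j
  proof -
    have "(\<phi> ^^ k) w \<in> (\<phi> ^^ (j + k)) ` span B"
      using k[of "j + k"] w(1) by simp
    also have "\<dots> \<subseteq> (\<phi> ^^ j) ` span B"
      using antimonoD[OF funpow_image_antimono[OF assms(2)], of j "j + k"] by simp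
    finally show ?thesis .
  qed
  then have "(\<phi> ^^ k) w \<in> stable_image"
    unfolding stable_image_def using assms(1,2) by blast
  ultimately show ?thesis
    by (intro exI[of _ "v - (\<phi> ^^ k) w"] exI[of _ "(\<phi> ^^ k) w"]) simp
qed

lemma gen_kernel_Int_stable_image: "gen_kernel \<inter> stable_image = {0}"
proof -
  have "v = 0" if vK: "v \<in> gen_kernel" and vI: "v \<in> stable_image" for v
  proof -
    obtain m where m: "(\<phi> ^^ m) v = 0"
      using vK unfolding gen_kernel_def by blast
    obtain B where B: "finite B" "\<forall>j. v \<in> (\<phi> ^^ j) ` span B"
      using vI unfolding stable_image_def by blast
    obtain k where k: "\<And>j. j \<ge> k \<Longrightarrow>
        span B \<inter> {w. (\<phi> ^^ j) w = 0} = span B \<inter> {w. (\<phi> ^^ k) w = 0}"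
      using kernel_chain_stabilizes[OF B(1)] by blast
    obtain w where w: "w \<in> span B" "v = (\<phi> ^^ k) w"
      using B(2) by blast
    have "(\<phi> ^^ (m + k)) w = 0"
      using m w(2) by (simp add: funpow_add)
    then have "(\<phi> ^^ k) w = 0"
      using k[of "m + k"] w(1) by auto
    then show "v = 0"
      using w(2) by simp
  qed
  moreover have "0 \<in> gen_kernel"
    unfolding gen_kernel_def by auto
  moreover have "0 \<in> stable_image"
    unfolding stable_image_def by (auto intro!: exI[of _ "{}"])
  ultimately show ?thesis by blast
qed

lemma subspace_gen_kernel: "subspace gen_kernel"
proof (rule subspaceI)
  show "0 \<in> gen_kernel"
    unfolding gen_kernel_def by auto
next
  fix x y assume "x \<in> gen_kernel" "y \<in> gen_kernel"
  then obtain m n where "(\<phi> ^^ m) x = 0" "(\<phi> ^^ n) y = 0"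
    unfolding gen_kernel_def by blast
  then have "(\<phi> ^^ (m + n)) x = 0" "(\<phi> ^^ (m + n)) y = 0"
    using pow_eq_0_mono by auto
  then have "(\<phi> ^^ (m + n)) (x + y) = 0"
    by (simp add: pow_add)
  then show "x + y \<in> gen_kernel"
    unfolding gen_kernel_def by blast
next
  fix c x assume "x \<in> gen_kernel"
  then show "s c x \<in> gen_kernel"
    unfolding gen_kernel_def by (auto simp: pow_scale)
qed

lemma subspace_stable_image: "subspace stable_image"
proof (rule subspaceI)
  show "0 \<in> stable_image"
    unfolding stable_image_def by (auto intro!: exI[of _ "{}"])
next
  fix x y assume "x \<in> stable_image" "y \<in> stable_image"
  then obtain B C where B: "finite B" "\<phi> ` span B \<subseteq> span B" "\<forall>j. x \<in> (\<phi> ^^ j) ` span B"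
    and C: "finite C" "\<phi> ` span C \<subseteq> span C" "\<forall>j. y \<in> (\<phi> ^^ j) ` span C"
    unfolding stable_image_def by blast
  have "x + y \<in> (\<phi> ^^ j) ` span (B \<union> C)" for j
  proof -
    obtain v w where "v \<in> span B" "x = (\<phi> ^^ j) v" "w \<in> span C" "y = (\<phi> ^^ j) w"
      using B(3) C(3) by blast
    then have "v + w \<in> span (B \<union> C)" "x + y = (\<phi> ^^ j) (v + w)"
      using span_mono[of B "B \<union> C"] span_mono[of C "B \<union> C"]
      by (auto simp: pow_add intro: span_add)
    then show ?thesis by blast
  qed
  then show "x + y \<in> stable_image"
    unfolding stable_image_def using B(1,2) C(1,2) stable_span_Un
    by (intro CollectI exI[of _ "B \<union> C"]) simp
next
  fix c x assume "x \<in> stable_image"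
  then obtain B where B: "finite B" "\<phi> ` span B \<subseteq> span B" "\<forall>j. x \<in> (\<phi> ^^ j) ` span B"
    unfolding stable_image_def by blast
  have "s c x \<in> (\<phi> ^^ j) ` span B" for j
  proof -
    obtain w where "w \<in> span B" "x = (\<phi> ^^ j) w"
      using B(3) by blast
    then show ?thesis
      using pow_scale[of j c w] by (auto intro!: image_eqI[of _ _ "s c w"] span_scale)
  qed
  then show "s c x \<in> stable_image"
    unfolding stable_image_def using B(1,2) by blast
qed

lemma subspace_locally_finite_part: "subspace locally_finite_part"
proof (rule subspaceI)
  show "0 \<in> locally_finite_part"
    unfolding locally_finite_part_def by (auto intro!: exI[of _ "{}"] span_zero)
next
  fix x y assume "x \<in> locally_finite_part" "y \<in> locally_finite_part"
  then obtain B C where B: "finite B" "\<phi> ` span B \<subseteq> span B" "x \<in> span B"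
    and C: "finite C" "\<phi> ` span C \<subseteq> span C" "y \<in> span C"
    unfolding locally_finite_part_def by blast
  have "x + y \<in> span (B \<union> C)"
    using B(3) C(3) span_mono[of B "B \<union> C"] span_mono[of C "B \<union> C"]
    by (auto intro: span_add)
  then show "x + y \<in> locally_finite_part"
    unfolding locally_finite_part_def using B(1,2) C(1,2) stable_span_Un
    by (intro CollectI exI[of _ "B \<union> C"]) simp
next
  fix c x assume "x \<in> locally_finite_part"
  then show "s c x \<in> locally_finite_part"
    unfolding locally_finite_part_def by (auto intro: span_scale)
qed

lemma fin_dim_stable_subset_locally_finite_part:
  assumes "fin_dim s S" "\<phi> ` S \<subseteq> S"
  shows "S \<subseteq> locally_finite_part"
proof -
  obtain B where "finite B" "span B = S"
    using assms(1) unfolding fin_dim_def by blast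
  then show ?thesis
    unfolding locally_finite_part_def using assms(2) by blast
qed

lemma gen_kernel_invariant:
  assumes "module_hom s s g" "\<And>v. g (\<phi> v) = \<phi> (g v)" "v \<in> gen_kernel"
  shows "g v \<in> gen_kernel"
proof -
  obtain m where "(\<phi> ^^ m) v = 0"
    using assms(3) unfolding gen_kernel_def by blast
  then have "(\<phi> ^^ m) (g v) = 0"
    using funpow_commute[of g \<phi>, OF assms(2)] module_hom.zero[OF assms(1)] by simp
  then show ?thesis
    unfolding gen_kernel_def by blast
qed

lemma stable_image_invariant:
  assumes "module_hom s s g" "\<And>v. g (\<phi> v) = \<phi> (g v)" "v \<in> stable_image"
  shows "g v \<in> stable_image"
proof -
  obtain B where B: "finite B" "\<phi> ` span B \<subseteq> span B" "\<forall>j. v \<in> (\<phi> ^^ j) ` span B"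
    using assms(3) unfolding stable_image_def by blast
  have "g v \<in> (\<phi> ^^ j) ` span (g ` B)" for j
  proof -
    obtain w where "w \<in> span B" "v = (\<phi> ^^ j) w"
      using B(3) by blast
    then have "g w \<in> span (g ` B)" "g v = (\<phi> ^^ j) (g w)"
      using module_hom.span_image[OF assms(1)] funpow_commute[of g \<phi>, OF assms(2)] by auto
    then show ?thesis by blast
  qed
  then show ?thesis
    unfolding stable_image_def using B(1) stable_span_image[OF assms(1,2) B(2)] by blast
qed

theorem indecomposable_endo_bij_or_locally_nilpotent:
  fixes act :: "'g \<Rightarrow> 'm \<Rightarrow> 'm"
  assumes indec: "indecomposable s act"
    and act_hom: "\<And>x. module_hom s s (act x)"
    and commute: "\<And>x v. \<phi> (act x v) = act x (\<phi> v)"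
    and loc_fin: "locally_finite_part = UNIV"
  shows "bij \<phi> \<or> (\<forall>v. \<exists>k. (\<phi> ^^ k) v = 0)"
proof -
  have sum: "{u + v | u v. u \<in> gen_kernel \<and> v \<in> stable_image} = UNIV"
    using loc_fin stable_span_decompose unfolding locally_finite_part_def by blast
  have "submodule s act gen_kernel" "submodule s act stable_image"
    unfolding submodule_def
    using subspace_gen_kernel subspace_stable_image
      gen_kernel_invariant[OF act_hom commute[symmetric]]
      stable_image_invariant[OF act_hom commute[symmetric]] by blast+
  then have "gen_kernel = {0} \<or> stable_image = {0}"
    using indec gen_kernel_Int_stable_image sum unfolding indecomposable_def by blast
  then show ?thesis
  proof
    assume K0: "gen_kernel = {0}"
    have "x = 0" if "\<phi> x = 0" for x
    proof -
      have "(\<phi> ^^ 1) x = 0"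
        using that by simp
      then have "x \<in> gen_kernel"
        unfolding gen_kernel_def by blast
      then show "x = 0"
        using K0 by blast
    qed
    then have "inj \<phi>"
      unfolding module_hom.inj_iff_eq_0[OF hom] by blast
    moreover have "surj \<phi>"
    proof -
      have "y \<in> stable_image" for y
        using sum K0 by auto
      then have "y \<in> (\<phi> ^^ 1) ` UNIV" for y
        unfolding stable_image_def by blast
      then have "y \<in> range \<phi>" for y
        by simp
      then show ?thesis by blast
    qed
    ultimately show ?thesis
      by (simp add: bij_def)
  next
    assume "stable_image = {0}"
    then have "v \<in> gen_kernel" for v
      using sum by auto
    then show ?thesis
      unfolding gen_kernel_def by blast
  qed
qed

end

lemma module_endo_weight_space:
  assumes "module_endo sm act \<phi>"
  shows "\<phi> ` weight_space sm act h lam \<subseteq> weight_space sm act h lam"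
proof
  fix w assume "w \<in> \<phi> ` weight_space sm act h lam"
  then obtain v where v: "v \<in> weight_space sm act h lam" "w = \<phi> v"
    by blast
  have "act t w = sm (lam t) w" if "t \<in> h" for t
  proof -
    have "act t w = \<phi> (act t v)"
      using assms v(2) unfolding module_endo_def by simp
    also have "\<dots> = sm (lam t) w"
      using assms v that unfolding module_endo_def weight_space_def by simp
    finally show ?thesis .
  qed
  then show "w \<in> weight_space sm act h lam"
    unfolding weight_space_def by blast
qed

theorem mainTheorem8:
  fixes sg :: "'k::field_char_0 \<Rightarrow> 'g::ab_group_add \<Rightarrow> 'g"
    and br :: "'g \<Rightarrow> 'g \<Rightarrow> 'g"
    and gs :: "nat \<Rightarrow> 'g set"
    and h :: "'g set"
    and P :: "('g \<Rightarrow> 'k) set"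
    and sm :: "'k \<Rightarrow> 'm::ab_group_add \<Rightarrow> 'm"
    and act :: "'g \<Rightarrow> 'm \<Rightarrow> 'm"
    and \<phi> :: "'m \<Rightarrow> 'm"
  assumes "alg_closed_field TYPE('k)"
    and "lie_algebra sg br"
    and "root_reductive sg br gs h"
    and "splitting_max_toral sg br h"
    and "pos_system sg br h P"
    and "dynkin sg br h P"
    and "in_O_bar sg br h P sm act"
    and "indecomposable sm act"
    and "module_endo sm act \<phi>"
  shows "bij \<phi> \<or> (\<forall>v. \<exists>k. (\<phi> ^^ k) v = 0)"
proof -
  from assms(7) have "g_module sg br sm act"
    and spanned: "module.span sm (\<Union>lam. weight_space sm act h lam) = UNIV"
    and fd: "\<And>lam. fin_dim sm (weight_space sm act h lam)"
    unfolding in_O_bar_def by auto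
  then have vs: "vector_space sm" and act_hom: "\<And>x. module_hom sm sm (act x)"
    unfolding g_module_def by (auto simp: module_hom_iff module_iff_vector_space)
  have "module_hom sm sm \<phi>"
    using assms(9) vs unfolding module_endo_def by (simp add: module_hom_iff module_iff_vector_space)
  then interpret linear_endo sm \<phi>
    using vs by (simp add: linear_endo_def linear_endo_axioms_def)
  have "(\<Union>lam. weight_space sm act h lam) \<subseteq> locally_finite_part"
    using fin_dim_stable_subset_locally_finite_part[OF fd module_endo_weight_space[OF assms(9)]]
    by blast
  then have "locally_finite_part = UNIV"
    using span_minimal[OF _ subspace_locally_finite_part] spanned by blast
  moreover have "\<And>x v. \<phi> (act x v) = act x (\<phi> v)"
    using assms(9) unfolding module_endo_def by blast
  ultimately show ?thesis
    using indecomposable_endo_bij_or_locally_nilpotent[OF assms(8) act_hom] by blast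
qed

end
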